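(* Let $k\ge2$, $K\ge1$ be integers, let $R\ge k$ be an integer and $L$ a positive integer divisible by $R^{K-1}$. For $A$ dividing $L$ let $f_A=(\mathsf{1}^A\mathsf{2}^A\cdots\mathsf{k}^A)^{L/A}\in[k]^{kL}$, and for a word $w$ over $[K]$ let $\hat w$ be the word over $[k]$ obtained by replacing each symbol $l\in[K]$ of $w$ by $f_{R^{l-1}}$. Let $w_1,w_2$ be words over $[K]$ and let $s=(w_1',w_2')$ be a badly-matched common subsequence between $\hat w_1$ and $\hat w_2$. Then \[\operatorname{span} w_1'+\operatorname{span} w_2'\ \ge\ \left(k+1-\frac kR-\frac{8R^{K-1}}{L}\right)\operatorname{len} s-16R^{K-1}.\]
   Context: $\alpha^A$ denotes letter $\alpha$ repeated $A$ times, and $u^m$ denotes $m$ concatenated copies of the word $u$. Symbols are distinguishable positions. If a symbol $x$ of $\hat w$ arises from expanding the symbol $y$ of $w$, then $y$ is the parent of $x$. A common subsequence of words $u_1,u_2$ is a pair $(u_1',u_2')$ of subsequences of $u_1,u_2$ that are equal as words, with length $\operatorname{len}$ their common length. For a common subsequence $(w_1',w_2')$ of $\hat w_1,\hat w_2$, its $i$-th symbol is well-matched if the parents of $w_1'[i]$ and $w_2'[i]$ are the same letter of $[K]$; the common subsequence is badly-matched if none of its symbols is well-matched. The span of a subsequence $w'$ in $w$ is the length of the shortest subword (block of consecutive symbols) of $w$ containing $w'$; $\operatorname{span} w_1'$ is taken in $\hat w_1$ and $\operatorname{span}w_2'$ in $\hat w_2$. *)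

theory Defs
  imports Complex_Main
begin

text \<open>Words are lists of naturals; the alphabet [k] is {1..k}.\<close>

definition fword :: "nat \<Rightarrow> nat \<Rightarrow> nat \<Rightarrow> nat list" where
  "fword k L A = concat (replicate (L div A) (concat (map (\<lambda>c. replicate A c) [1..<Suc k])))"

definition hat :: "nat \<Rightarrow> nat \<Rightarrow> nat \<Rightarrow> nat list \<Rightarrow> nat list" where
  "hat k L R w = concat (map (\<lambda>l. fword k L (R ^ (l - 1))) w)"

definition subseq_idx :: "nat list \<Rightarrow> 'a list \<Rightarrow> bool" where
  "subseq_idx I u \<longleftrightarrow> sorted_wrt (<) I \<and> (\<forall>i\<in>set I. i < length u)"

definition common_subseq :: "'a list \<Rightarrow> 'a list \<Rightarrow> nat list \<Rightarrow> nat list \<Rightarrow> bool" where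
  "common_subseq u1 u2 I1 I2 \<longleftrightarrow> subseq_idx I1 u1 \<and> subseq_idx I2 u2 \<and>
     length I1 = length I2 \<and> (\<forall>i<length I1. u1 ! (I1 ! i) = u2 ! (I2 ! i))"

text \<open>Parent letter (in w) of position p of hat w: each letter of w expands to a block
  of length k*L (valid when every R^(l-1) divides L).\<close>
definition parent :: "nat \<Rightarrow> nat \<Rightarrow> nat list \<Rightarrow> nat \<Rightarrow> nat" where
  "parent k L w p = w ! (p div (k * L))"

definition badly_matched :: "nat \<Rightarrow> nat \<Rightarrow> nat list \<Rightarrow> nat list \<Rightarrow> nat list \<Rightarrow> nat list \<Rightarrow> bool" where
  "badly_matched k L w1 w2 I1 I2 \<longleftrightarrow>
     (\<forall>i<length I1. parent k L w1 (I1 ! i) \<noteq> parent k L w2 (I2 ! i))"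

definition span :: "nat list \<Rightarrow> nat" where
  "span I = (if I = [] then 0 else last I - hd I + 1)"

end

theory Submission
  imports Defs
begin

text \<open>At each match the parent
  letters differ, so the runs of equal letters through \<open>p\<^sub>j\<close> and \<open>q\<^sub>j\<close> have lengths
  \<open>a\<close>, \<open>b\<close> with, say, \<open>R a \<le> b\<close>. Give the match the potential
  \<open>(k - 1) (p mod a) - (k / R) (q mod b)\<close>. Between consecutive matches inside the same
  pair of parent blocks the distance travelled in both words plus the increase of the potential
  is at least \<open>k + 1 - k / R\<close>: if the coarse position stays in its run, the fine position must
  come back to the same letter, which takes a full period of \<open>k\<close> runs or an increase of its
  offset; if it enters a new run, it travels at least \<open>b \<ge> R a\<close>, which pays for the loss of
  fine offset. The potential is bounded by \<open>R ^ (K - 1)\<close>, so each change of parent block costs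
  at most \<open>4 R ^ (K - 1)\<close>, and in each word the number of such changes is at most its span
  divided by the block length \<open>k L\<close>, plus one.\<close>

lemma nth_concat_uniform:
  assumes "\<forall>xs\<in>set xss. length xs = m" "p < length xss * m"
  shows "concat xss ! p = xss ! (p div m) ! (p mod m)"
  using assms
proof (induction xss arbitrary: p)
  case Nil
  then show ?case by simp
next
  case (Cons xs xss)
  have lx: "length xs = m" and m0: "m > 0"
    using Cons.prems by (auto intro: gr0I)
  show ?case
  proof (cases "p < m")
    case True
    then show ?thesis using lx by (simp add: nth_append)
  next
    case False
    have "concat xss ! (p - m) = xss ! ((p - m) div m) ! ((p - m) mod m)"
      using Cons False by auto
    moreover have "(p - m) div m = p div m - 1" "(p - m) mod m = p mod m" "p div m \<ge> 1"
      using False m0 by (simp_all add: le_div_geq le_mod_geq)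
    ultimately show ?thesis using lx False by (simp add: nth_append nth_Cons')
  qed
qed

lemma length_concat_uniform:
  "\<forall>xs\<in>set xss. length xs = m \<Longrightarrow> length (concat xss) = length xss * m"
  by (induction xss) auto

lemma length_fword:
  assumes "A dvd L" "A > 0"
  shows "length (fword k L A) = k * L"
proof -
  have "length (fword k L A) = L div A * (k * A)"
    by (simp add: fword_def length_concat o_def sum_list_triv sum_list_replicate del: upt_Suc)
  then show ?thesis using assms by simp
qed

lemma nth_fword:
  assumes "A dvd L" "A > 0" "j < k * L"
  shows "fword k L A ! j = (j div A) mod k + 1"
proof -
  define run where "run = concat (map (\<lambda>c. replicate A c) [1..<Suc k])"
  have run: "length run = k * A"
    unfolding run_def by (simp add: length_concat o_def sum_list_triv del: upt_Suc)
  have kA: "k * A > 0" using assms by (cases k) auto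
  have L: "L div A * (k * A) = k * L"
    using assms(1,2) by (metis dvd_div_mult_self mult.commute mult.left_commute)
  have "fword k L A ! j = replicate (L div A) run ! (j div (k * A)) ! (j mod (k * A))"
    unfolding fword_def run_def[symmetric]
  proof (rule nth_concat_uniform)
    show "j < length (replicate (L div A) run) * (k * A)"
      using L assms(3) by (simp only: length_replicate)
  qed (simp add: run)
  also have "\<dots> = run ! (j mod (k * A))"
  proof -
    have "j div (k * A) < L div A"
      using assms(3) L kA by (metis div_less_iff_less_mult)
    then show ?thesis by simp
  qed
  also have "\<dots> = (j mod (k * A)) div A + 1"
  proof -
    have "j mod (k * A) div A < k"
      using kA by (simp add: div_less_iff_less_mult assms(2))
    then show ?thesis
      unfolding run_def using kA
      by (subst nth_concat_uniform[where m = A]) (auto simp del: upt_Suc)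
  qed
  also have "(j mod (k * A)) div A = (j div A) mod k"
    using mod_mult2_eq[of j A k] assms(2) by (simp add: mult.commute)
  finally show ?thesis .
qed

definition run_length :: "nat \<Rightarrow> nat \<Rightarrow> nat \<Rightarrow> nat list \<Rightarrow> nat \<Rightarrow> nat" where
  "run_length k L R w p = R ^ (parent k L w p - 1)"

lemma letter_power_dvd:
  fixes R L K :: nat and w :: "nat list"
  assumes "R ^ (K - 1) dvd L" "set w \<subseteq> {1..K}"
  shows "\<forall>l\<in>set w. R ^ (l - 1) dvd L"
proof
  fix l assume "l \<in> set w"
  then have "l \<le> K" using assms(2) by auto
  then have "l - 1 \<le> K - 1" by (rule diff_le_mono)
  then have "R ^ (l - 1) dvd R ^ (K - 1)" by (rule le_imp_power_dvd)
  then show "R ^ (l - 1) dvd L" using assms(1) by (rule dvd_trans)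
qed

lemma length_hat:
  assumes "\<forall>l\<in>set w. R ^ (l - 1) dvd L" "R > 0"
  shows "length (hat k L R w) = length w * (k * L)"
  unfolding hat_def using assms
  by (subst length_concat_uniform[where m = "k * L"]) (auto simp: length_fword)

lemma mod_period_div_mod:
  fixes p A k L :: nat
  assumes "A dvd L" "A > 0"
  shows "(p mod (k * L) div A) mod k = (p div A) mod k"
proof -
  obtain m where L: "L = A * m" using assms(1) by blast
  have "p = A * (k * m * (p div (k * L))) + p mod (k * L)"
    using div_mult_mod_eq[of p "k * L"] L by (simp add: ac_simps)
  then have "p div A = k * m * (p div (k * L)) + p mod (k * L) div A"
    using assms(2) by (metis div_mult_self3 add.commute mult.commute neq0_conv)
  then show ?thesis by (simp add: mult.assoc)
qed

lemma nth_hat: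
  assumes "\<forall>l\<in>set w. R ^ (l - 1) dvd L" "R > 0" "p < length (hat k L R w)"
  shows "hat k L R w ! p = (p div run_length k L R w p) mod k + 1"
proof -
  define A where "A = run_length k L R w p"
  have p: "p < length w * (k * L)" using assms length_hat by metis
  then have kL: "k * L > 0" by (cases "k * L") auto
  have block: "p div (k * L) < length w"
    using p kL by (simp add: div_less_iff_less_mult)
  have A: "A = R ^ (w ! (p div (k * L)) - 1)"
    unfolding A_def run_length_def parent_def ..
  have "A dvd L" "A > 0"
    unfolding A using assms(1,2) block by auto
  have "hat k L R w ! p = map (\<lambda>l. fword k L (R ^ (l - 1))) w ! (p div (k * L)) ! (p mod (k * L))"
    unfolding hat_def using assms(1,2) p by (intro nth_concat_uniform) (auto simp: length_fword)
  also have "\<dots> = fword k L A ! (p mod (k * L))"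
    using block by (simp add: A)
  also have "\<dots> = (p mod (k * L) div A) mod k + 1"
    using \<open>A dvd L\<close> \<open>A > 0\<close> kL by (intro nth_fword) auto
  also have "\<dots> = (p div A) mod k + 1"
    using \<open>A dvd L\<close> \<open>A > 0\<close> by (simp add: mod_period_div_mod)
  finally show ?thesis unfolding A_def .
qed

lemma parent_in_alphabet:
  assumes "R ^ (K - 1) dvd L" "R > 0" "set w \<subseteq> {1..K}" "p < length (hat k L R w)"
  shows "parent k L w p \<in> {1..K}"
proof -
  have "p < length w * (k * L)"
    using assms length_hat letter_power_dvd by metis
  then have "p div (k * L) < length w"
    by (cases "k * L") (auto simp: div_less_iff_less_mult)
  then show ?thesis using assms(3) nth_mem unfolding parent_def by blast
qed

lemma power_separated:
  fixes R :: nat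
  assumes "m \<noteq> n" "R > 0"
  shows "R * R ^ m \<le> R ^ n \<or> R * R ^ n \<le> R ^ m"
  using assms by (cases "m < n") (auto intro: power_increasing simp flip: power_Suc)

lemma mod_eq_imp_add_le:
  fixes u u' k :: nat
  assumes "u < u'" "u mod k = u' mod k"
  shows "u + k \<le> u'"
proof -
  obtain c where c: "u' - u = k * c"
    using assms mod_eq_dvd_iff_nat[of u u' k] by (auto elim: dvdE)
  then have "c \<ge> 1" using assms(1) by (cases c) auto
  then have "k \<le> k * c" by simp
  then show ?thesis using c assms(1) by linarith
qed

lemma fine_gain_same_letter:
  fixes p p' a k :: nat
  assumes "a > 0" "k \<ge> 1" "p < p'" "(p div a) mod k = (p' div a) mod k"
  shows "real k \<le> real (p' - p) + real (k - 1) * (real (p' mod a) - real (p mod a))"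
proof -
  define u u' where "u = p div a" and "u' = p' div a"
  have p: "real p = real u * real a + real (p mod a)"
    and p': "real p' = real u' * real a + real (p' mod a)"
    unfolding u_def u'_def by (simp_all flip: of_nat_mult of_nat_add)
  have k: "real (k - 1) = real k - 1" using assms(2) by simp
  have gap: "real (p' - p) = real p' - real p" using assms(3) by simp
  show ?thesis
  proof (cases "u = u'")
    case True
    then have offsets: "real (p' mod a) - real (p mod a) = real p' - real p" using p p' by simp
    have "1 \<le> real p' - real p" using assms(3) by simp
    then have "real k * 1 \<le> real k * (real p' - real p)" by (intro mult_left_mono) auto
    then show ?thesis unfolding gap k offsets by (simp add: algebra_simps)
  next
    case False
    then have "u + k \<le> u'"
      using assms(3,4) mod_eq_imp_add_le div_le_mono unfolding u_def u'_def
      by (metis le_neq_implies_less less_imp_le)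
    then have "(real u + real k) * real a \<le> real u' * real a"
      by (intro mult_right_mono) auto
    then have "real k * real a + real (p' mod a) - real (p mod a) \<le> real p' - real p"
      using p p' by (simp add: algebra_simps)
    moreover have "p mod a < a" using assms(1) by simp
    then have "real (p mod a) \<le> real a - 1" by linarith
    then have "real k * real (p mod a) \<le> real k * (real a - 1)" by (intro mult_left_mono) auto
    moreover have "0 \<le> real k * real (p' mod a)" by simp
    moreover have "(real k - 1) * (real (p' mod a) - real (p mod a))
      = real k * real (p' mod a) - real k * real (p mod a) - real (p' mod a) + real (p mod a)"
      by (simp add: algebra_simps)
    moreover have "real k * (real a - 1) = real k * real a - real k" by (simp add: algebra_simps)
    ultimately show ?thesis unfolding gap k by linarith
  qed
qed

lemma fine_gain:
  fixes p p' a k :: nat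
  assumes "a > 0" "p < p'"
  shows "1 - real (k - 1) * (real a - 1)
    \<le> real (p' - p) + real (k - 1) * (real (p' mod a) - real (p mod a))"
proof -
  have "p mod a < a" using assms by simp
  then have "- (real a - 1) \<le> real (p' mod a) - real (p mod a)" by linarith
  then have "real (k - 1) * (- (real a - 1)) \<le> real (k - 1) * (real (p' mod a) - real (p mod a))"
    by (intro mult_left_mono) auto
  moreover have "real (k - 1) * (- (real a - 1)) = - (real (k - 1) * (real a - 1))"
    by (rule mult_minus_right)
  moreover have "1 \<le> real (p' - p)" using assms by simp
  ultimately show ?thesis by linarith
qed

lemma coarse_gain_same_run:
  fixes q q' b :: nat and c :: real
  assumes "q div b = q' div b" "q < q'" "c \<le> 1"
  shows "1 - c \<le> real (q' - q) - c * (real (q' mod b) - real (q mod b))"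
proof -
  have "real q = real (q div b) * real b + real (q mod b)"
    and "real q' = real (q' div b) * real b + real (q' mod b)"
    by (simp_all flip: of_nat_mult of_nat_add)
  then have offsets: "real (q' mod b) - real (q mod b) = real (q' - q)"
    using assms(1,2) by (simp add: of_nat_diff)
  have "(1 - c) * 1 \<le> (1 - c) * real (q' - q)"
    using assms(2,3) by (intro mult_left_mono) auto
  then show ?thesis unfolding offsets by (simp add: algebra_simps)
qed

lemma coarse_gain_new_run:
  fixes q q' b :: nat and c :: real
  assumes "q div b < q' div b" "c \<le> 1"
  shows "1 + c * (real b - 1) \<le> real (q' - q) - c * (real (q' mod b) - real (q mod b))"
proof -
  have "b > 0" using assms(1) by (cases b) auto
  have "q < q'" using assms(1) by (metis div_le_mono not_le)
  have q: "real q = real (q div b) * real b + real (q mod b)"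
    and q': "real q' = real (q' div b) * real b + real (q' mod b)"
    by (simp_all flip: of_nat_mult of_nat_add)
  have "(real (q div b) + 1) * real b \<le> real (q' div b) * real b"
    using assms(1) by (intro mult_right_mono) auto
  then have "real b + real (q' mod b) - real (q mod b) \<le> real (q' - q)"
    using q q' \<open>q < q'\<close> by (simp add: of_nat_diff algebra_simps)
  moreover have "q mod b < b" using \<open>b > 0\<close> by simp
  then have "(1 - c) * (- (real b - 1)) \<le> (1 - c) * (real (q' mod b) - real (q mod b))"
    using assms(2) by (intro mult_left_mono) auto
  ultimately show ?thesis by (simp add: algebra_simps)
qed

definition scale_potential :: "nat \<Rightarrow> nat \<Rightarrow> nat \<Rightarrow> nat \<Rightarrow> nat \<Rightarrow> nat \<Rightarrow> real" where
  "scale_potential k R a b p q = real (k - 1) * real (p mod a) - real k / real R * real (q mod b)"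

lemma scale_potential_step:
  fixes k R a b p q p' q' :: nat
  assumes "k \<ge> 2" "R \<ge> k" "a > 0" "R * a \<le> b" "p < p'" "q < q'"
    "(p div a) mod k = (q div b) mod k" "(p' div a) mod k = (q' div b) mod k"
  shows "real k + 1 - real k / real R
    \<le> real (p' - p) + real (q' - q) + scale_potential k R a b p' q' - scale_potential k R a b p q"
proof -
  define c where "c = real k / real R"
  have c: "c \<le> 1" unfolding c_def using assms(1,2) by simp
  have split: "real (p' - p) + real (q' - q) + scale_potential k R a b p' q' - scale_potential k R a b p q
    = (real (p' - p) + real (k - 1) * (real (p' mod a) - real (p mod a)))
      + (real (q' - q) - c * (real (q' mod b) - real (q mod b)))"
    unfolding scale_potential_def c_def by (simp add: algebra_simps)
  show ?thesis
  proof (cases "q div b = q' div b")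
    case True
    then have "(p div a) mod k = (p' div a) mod k" using assms(7,8) by simp
    then show ?thesis
      unfolding split c_def[symmetric]
      using fine_gain_same_letter[of a k p p'] coarse_gain_same_run[OF True assms(6) c] assms
      by linarith
  next
    case False
    then have "q div b < q' div b" using assms(6) div_le_mono le_neq_implies_less less_imp_le
      by metis
    note gains = fine_gain[OF assms(3,5), of k] coarse_gain_new_run[OF this c]
    have "real R * real a \<le> real b" using assms(4) by (simp flip: of_nat_mult)
    then have "real k * real a \<le> c * real b"
      unfolding c_def using assms(1,2) by (simp add: field_simps)
    moreover have "real (k - 1) * (real a - 1) = real k * real a - real a - real k + 1"
      using assms(1) by (simp add: algebra_simps of_nat_diff)
    moreover have "c * (real b - 1) = c * real b - c" by (simp add: algebra_simps)
    ultimately show ?thesis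
      unfolding split c_def[symmetric] using gains assms(3) by linarith
  qed
qed

lemma abs_scale_potential_le:
  fixes k R a b p q :: nat
  assumes "k \<ge> 1" "R \<ge> k" "a > 0" "R * a \<le> b"
  shows "\<bar>scale_potential k R a b p q\<bar> \<le> real b"
proof -
  have "(k - 1) * (p mod a) \<le> R * a"
    using assms(2,3) by (intro mult_le_mono) auto
  then have fine: "real (k - 1) * real (p mod a) \<le> real b"
    using assms(4) by (simp flip: of_nat_mult)
  have "R * a > 0" using assms(1-3) by simp
  then have "b > 0" using assms(4) by linarith
  then have "real (q mod b) \<le> real b" by simp
  moreover have "real k / real R \<le> 1" using assms(1,2) by simp
  ultimately have "real k / real R * real (q mod b) \<le> 1 * real b"
    by (intro mult_mono) auto
  moreover have "0 \<le> real k / real R * real (q mod b)" "0 \<le> real (k - 1) * real (p mod a)"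
    by simp_all
  ultimately show ?thesis
    unfolding scale_potential_def abs_le_iff using fine by linarith
qed

lemma separated_scales_ordered:
  fixes R a b :: nat
  assumes "R > 0" "R * a \<le> b \<or> R * b \<le> a"
  shows "if a < b then R * a \<le> b else R * b \<le> a"
proof (cases "a < b")
  case True
  have "b \<le> R * b" using assms(1) by simp
  then have "\<not> R * b \<le> a" using True by linarith
  then show ?thesis using True assms(2) by simp
next
  case False
  have "a \<le> R * a" "R * b \<le> R * a" using assms(1) False by simp_all
  then have "R * a \<le> b \<Longrightarrow> R * b \<le> a" using False by linarith
  then show ?thesis using False assms(2) by auto
qed

definition pair_potential :: "nat \<Rightarrow> nat \<Rightarrow> nat \<Rightarrow> nat \<Rightarrow> nat \<Rightarrow> nat \<Rightarrow> real" where
  "pair_potential k R a b p q =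
     (if a < b then scale_potential k R a b p q else scale_potential k R b a q p)"

lemma pair_potential_step:
  fixes k R a b p q p' q' :: nat
  assumes "k \<ge> 2" "R \<ge> k" "a > 0" "b > 0" "R * a \<le> b \<or> R * b \<le> a" "p < p'" "q < q'"
    "(p div a) mod k = (q div b) mod k" "(p' div a) mod k = (q' div b) mod k"
  shows "real k + 1 - real k / real R
    \<le> real (p' - p) + real (q' - q) + pair_potential k R a b p' q' - pair_potential k R a b p q"
proof -
  have sep: "if a < b then R * a \<le> b else R * b \<le> a"
    using assms(1,2,5) by (intro separated_scales_ordered) auto
  show ?thesis
  proof (cases "a < b")
    case True
    then show ?thesis
      using scale_potential_step[of k R a b p p' q q'] assms sep unfolding pair_potential_def
      by simp
  next
    case False
    then show ?thesis
      using scale_potential_step[of k R b a q q' p p'] assms sep unfolding pair_potential_def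
      by simp
  qed
qed

lemma abs_pair_potential_le:
  fixes k R a b p q :: nat
  assumes "k \<ge> 1" "R \<ge> k" "a > 0" "b > 0" "R * a \<le> b \<or> R * b \<le> a"
  shows "\<bar>pair_potential k R a b p q\<bar> \<le> real (max a b)"
proof -
  have "if a < b then R * a \<le> b else R * b \<le> a"
    using assms(1,2,5) by (intro separated_scales_ordered) auto
  then show ?thesis
    using assms abs_scale_potential_le[of k R a b p q] abs_scale_potential_le[of k R b a q p]
    unfolding pair_potential_def by (auto split: if_splits)
qed

lemma blocks_between_le:
  fixes x y N :: nat
  assumes "N > 0"
  shows "real N * (real (x div N) - real (y div N)) \<le> real x - real y + real N"
proof -
  have "real N * real (x div N) \<le> real x"
    by (simp flip: of_nat_mult)
  moreover have "real y < real N * real (y div N) + real N"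
    using div_mult_mod_eq[of y N] mod_less_divisor[OF assms, of y]
    by (metis add_less_cancel_left mult.commute of_nat_add of_nat_less_iff of_nat_mult)
  ultimately show ?thesis by (simp add: algebra_simps)
qed

lemma potential_telescope:
  fixes I1 I2 :: "nat list" and Ph :: "nat \<Rightarrow> real" and M t :: real and N j :: nat
  assumes "sorted_wrt (<) I1" "sorted_wrt (<) I2" "length I2 = length I1"
    and bound: "\<And>i. i < length I1 \<Longrightarrow> \<bar>Ph i\<bar> \<le> M" and "t \<le> 2 * M + 2"
    and step: "\<And>i. Suc i < length I1 \<Longrightarrow> I1 ! i div N = I1 ! Suc i div N \<Longrightarrow>
      I2 ! i div N = I2 ! Suc i div N \<Longrightarrow>
      t \<le> real (I1 ! Suc i) - real (I1 ! i) + (real (I2 ! Suc i) - real (I2 ! i)) + Ph (Suc i) - Ph i"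
    and "j < length I1"
  shows "t * real j - 4 * M * (real (I1 ! j div N) - real (I1 ! 0 div N)
      + (real (I2 ! j div N) - real (I2 ! 0 div N)))
    \<le> real (I1 ! j) - real (I1 ! 0) + (real (I2 ! j) - real (I2 ! 0)) + Ph j - Ph 0"
  using \<open>j < length I1\<close>
proof (induction j)
  case 0
  then show ?case by simp
next
  case (Suc j)
  let ?x = "I1 ! j" and ?x' = "I1 ! Suc j" and ?y = "I2 ! j" and ?y' = "I2 ! Suc j"
  have "?x < ?x'" "?y < ?y'"
    using assms(1-3) Suc.prems by (simp_all add: sorted_wrt_iff_nth_less)
  then have blocks: "?x div N \<le> ?x' div N" "?y div N \<le> ?y' div N"
    by (simp_all add: div_le_mono)
  have "t - 4 * M * (real (?x' div N) - real (?x div N) + (real (?y' div N) - real (?y div N)))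
    \<le> real ?x' - real ?x + (real ?y' - real ?y) + Ph (Suc j) - Ph j"
  proof (cases "?x div N = ?x' div N \<and> ?y div N = ?y' div N")
    case True
    then show ?thesis using step Suc.prems by simp
  next
    case False
    then have "1 \<le> real (?x' div N) - real (?x div N) + (real (?y' div N) - real (?y div N))"
      using blocks by (auto simp flip: of_nat_diff)
    moreover have "0 \<le> M" "\<bar>Ph j\<bar> \<le> M" "\<bar>Ph (Suc j)\<bar> \<le> M"
      using bound Suc.prems by (auto intro: order_trans[OF abs_ge_zero])
    ultimately have "4 * M * 1
      \<le> 4 * M * (real (?x' div N) - real (?x div N) + (real (?y' div N) - real (?y div N)))"
      by (intro mult_left_mono) auto
    moreover have "1 \<le> real ?x' - real ?x" "1 \<le> real ?y' - real ?y"
      using \<open>?x < ?x'\<close> \<open>?y < ?y'\<close> by linarith+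
    ultimately show ?thesis
      using \<open>\<bar>Ph j\<bar> \<le> M\<close> \<open>\<bar>Ph (Suc j)\<bar> \<le> M\<close> \<open>t \<le> 2 * M + 2\<close> by (simp add: abs_le_iff)
  qed
  with Suc.IH Suc.prems show ?case by (simp add: algebra_simps)
qed

lemma real_span_sorted:
  assumes "sorted_wrt (<) I" "I \<noteq> []"
  shows "real (span I) = real (I ! (length I - 1)) - real (I ! 0) + 1"
proof -
  have "I ! 0 \<le> I ! (length I - 1)"
    using assms by (cases "length I - 1") (auto simp: sorted_wrt_iff_nth_less less_imp_le)
  then show ?thesis
    using assms(2) by (simp add: span_def last_conv_nth hd_conv_nth of_nat_diff)
qed

lemma span_lower_bound_by_potential:
  fixes I1 I2 :: "nat list" and Ph :: "nat \<Rightarrow> real" and M t :: real and N :: nat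
  assumes "sorted_wrt (<) I1" "sorted_wrt (<) I2" "length I2 = length I1"
    and "\<And>i. i < length I1 \<Longrightarrow> \<bar>Ph i\<bar> \<le> M" and "0 \<le> M" "0 \<le> t"
    and "0 < length I1 \<Longrightarrow> t \<le> 2 * M + 2"
    and "\<And>i. Suc i < length I1 \<Longrightarrow> I1 ! i div N = I1 ! Suc i div N \<Longrightarrow>
      I2 ! i div N = I2 ! Suc i div N \<Longrightarrow>
      t \<le> real (I1 ! Suc i) - real (I1 ! i) + (real (I2 ! Suc i) - real (I2 ! i)) + Ph (Suc i) - Ph i"
    and "N > 0"
  shows "t * real (length I1) - 4 * M * t * real (length I1) / real N - 16 * M
    \<le> real (span I1) + real (span I2)"
proof (cases "I1 = []")
  case True
  then show ?thesis using assms(3,5) by (simp add: span_def)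
next
  case False
  define n j where "n = length I1" and "j = n - 1"
  have "j < n" "I2 \<noteq> []" using False assms(3) unfolding n_def j_def by auto
  have "t \<le> 2 * M + 2" using assms(7) False by simp
  define D where "D = real (I1 ! j) - real (I1 ! 0) + (real (I2 ! j) - real (I2 ! 0))"
  define E where "E = real (I1 ! j div N) - real (I1 ! 0 div N)
    + (real (I2 ! j div N) - real (I2 ! 0 div N))"
  have span: "real (span I1) + real (span I2) = D + 2"
    using real_span_sorted[OF assms(1) False] real_span_sorted[OF assms(2) \<open>I2 \<noteq> []\<close>] assms(3)
    unfolding D_def j_def n_def by simp
  have telescope: "t * real j - 4 * M * E \<le> D + Ph j - Ph 0"
    using potential_telescope[OF assms(1-4) \<open>t \<le> 2 * M + 2\<close> assms(8)] \<open>j < n\<close>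
    unfolding D_def E_def n_def by simp
  have "real N * E \<le> D + 2 * real N"
    using blocks_between_le[OF \<open>N > 0\<close>, of "I1 ! j" "I1 ! 0"]
      blocks_between_le[OF \<open>N > 0\<close>, of "I2 ! j" "I2 ! 0"]
    unfolding D_def E_def by (simp add: algebra_simps)
  then have "4 * M * E \<le> 4 * M * (D / real N + 2)"
    using \<open>N > 0\<close> \<open>0 \<le> M\<close> by (intro mult_left_mono) (simp_all add: field_simps)
  moreover have "\<bar>Ph j\<bar> \<le> M" "\<bar>Ph 0\<bar> \<le> M"
    using assms(4) \<open>j < n\<close> unfolding n_def by (auto intro: le_less_trans)
  moreover have "t * real j = t * real n - t" using \<open>j < n\<close> unfolding j_def
    by (simp add: of_nat_diff algebra_simps)
  ultimately have main: "t * real n - 4 * M * D / real N - 16 * M \<le> D + 2"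
    using telescope \<open>t \<le> 2 * M + 2\<close> by (simp add: abs_le_iff algebra_simps)
  show ?thesis
  proof (cases "D < t * real n")
    case True
    then have "4 * M * D \<le> 4 * M * (t * real n)"
      using \<open>0 \<le> M\<close> by (intro mult_left_mono) auto
    then have "4 * M * D / real N \<le> 4 * M * t * real n / real N"
      by (simp add: divide_right_mono mult.assoc)
    then show ?thesis using main span unfolding n_def by linarith
  next
    case False
    have "0 \<le> 4 * M * t * real n / real N" using \<open>0 \<le> M\<close> \<open>0 \<le> t\<close> by simp
    then show ?thesis using False span \<open>0 \<le> M\<close> unfolding n_def by linarith
  qed
qed

lemma run_length_pos_le:
  fixes R L K :: nat and w :: "nat list"
  assumes "R ^ (K - 1) dvd L" "R > 0" "set w \<subseteq> {1..K}" "p < length (hat k L R w)"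
  shows "0 < run_length k L R w p" "run_length k L R w p \<le> R ^ (K - 1)"
  using parent_in_alphabet[OF assms] assms(2)
  by (auto simp: run_length_def intro: power_increasing)

lemma run_lengths_separated:
  fixes R L K :: nat and w1 w2 :: "nat list"
  assumes "R ^ (K - 1) dvd L" "R > 0" "set w1 \<subseteq> {1..K}" "set w2 \<subseteq> {1..K}"
    "p < length (hat k L R w1)" "q < length (hat k L R w2)" "parent k L w1 p \<noteq> parent k L w2 q"
  shows "R * run_length k L R w1 p \<le> run_length k L R w2 q
    \<or> R * run_length k L R w2 q \<le> run_length k L R w1 p"
proof -
  have "parent k L w1 p - 1 \<noteq> parent k L w2 q - 1"
    using parent_in_alphabet[OF assms(1,2,3,5)] parent_in_alphabet[OF assms(1,2,4,6)] assms(7)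
    by auto
  then show ?thesis
    unfolding run_length_def using power_separated assms(2) by blast
qed

lemma matched_letters_mod:
  fixes R L K :: nat and w1 w2 :: "nat list"
  assumes "R ^ (K - 1) dvd L" "R > 0" "set w1 \<subseteq> {1..K}" "set w2 \<subseteq> {1..K}"
    "p < length (hat k L R w1)" "q < length (hat k L R w2)" "hat k L R w1 ! p = hat k L R w2 ! q"
  shows "(p div run_length k L R w1 p) mod k = (q div run_length k L R w2 q) mod k"
  using assms(7) nth_hat[OF letter_power_dvd[OF assms(1,3)] assms(2,5)]
    nth_hat[OF letter_power_dvd[OF assms(1,4)] assms(2,6)]
  by simp

lemma distinct_parents_imp_radix_le:
  fixes R L K :: nat and w1 w2 :: "nat list"
  assumes "R ^ (K - 1) dvd L" "R > 0" "set w1 \<subseteq> {1..K}" "set w2 \<subseteq> {1..K}"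
    "p < length (hat k L R w1)" "q < length (hat k L R w2)" "parent k L w1 p \<noteq> parent k L w2 q"
  shows "R \<le> R ^ (K - 1)"
proof -
  have "K \<ge> 2"
    using parent_in_alphabet[OF assms(1,2,3,5)] parent_in_alphabet[OF assms(1,2,4,6)] assms(7)
    by auto
  then show ?thesis using assms(2) power_increasing[of 1 "K - 1" R] by simp
qed

definition match_potential :: "nat \<Rightarrow> nat \<Rightarrow> nat \<Rightarrow> nat list \<Rightarrow> nat list \<Rightarrow> nat \<Rightarrow> nat \<Rightarrow> real"
  where "match_potential k L R w1 w2 p q =
    pair_potential k R (run_length k L R w1 p) (run_length k L R w2 q) p q"

lemma abs_match_potential_le:
  fixes R L K :: nat and w1 w2 :: "nat list"
  assumes "k \<ge> 1" "R \<ge> k" "R ^ (K - 1) dvd L" "set w1 \<subseteq> {1..K}" "set w2 \<subseteq> {1..K}"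
    "p < length (hat k L R w1)" "q < length (hat k L R w2)" "parent k L w1 p \<noteq> parent k L w2 q"
  shows "\<bar>match_potential k L R w1 w2 p q\<bar> \<le> real R ^ (K - 1)"
proof -
  have "R > 0" using assms(1,2) by simp
  note run_lengths = run_length_pos_le[OF assms(3) \<open>R > 0\<close> assms(4,6)]
    run_length_pos_le[OF assms(3) \<open>R > 0\<close> assms(5,7)]
  have "\<bar>match_potential k L R w1 w2 p q\<bar>
    \<le> real (max (run_length k L R w1 p) (run_length k L R w2 q))"
    unfolding match_potential_def using assms(1,2) run_lengths
    by (intro abs_pair_potential_le run_lengths_separated[OF assms(3) \<open>R > 0\<close> assms(4-8)])
  also have "\<dots> \<le> real R ^ (K - 1)"
    using run_lengths by (simp flip: of_nat_power)
  finally show ?thesis .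
qed

lemma match_potential_step:
  fixes R L K :: nat and w1 w2 :: "nat list"
  assumes "k \<ge> 2" "R \<ge> k" "R ^ (K - 1) dvd L" "set w1 \<subseteq> {1..K}" "set w2 \<subseteq> {1..K}"
    and "p < p'" "q < q'" "p' < length (hat k L R w1)" "q' < length (hat k L R w2)"
    and "p div (k * L) = p' div (k * L)" "q div (k * L) = q' div (k * L)"
    and "hat k L R w1 ! p = hat k L R w2 ! q" "hat k L R w1 ! p' = hat k L R w2 ! q'"
    and "parent k L w1 p \<noteq> parent k L w2 q"
  shows "real k + 1 - real k / real R \<le> real p' - real p + (real q' - real q)
    + match_potential k L R w1 w2 p' q' - match_potential k L R w1 w2 p q"
proof -
  have "R > 0" using assms(1,2) by simp
  have p: "p < length (hat k L R w1)" and q: "q < length (hat k L R w2)"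
    using assms(6-9) by simp_all
  have same_run_length: "run_length k L R w1 p' = run_length k L R w1 p"
    "run_length k L R w2 q' = run_length k L R w2 q"
    using assms(10,11) by (simp_all add: run_length_def parent_def)
  have "real k + 1 - real k / real R \<le> real (p' - p) + real (q' - q)
    + match_potential k L R w1 w2 p' q' - match_potential k L R w1 w2 p q"
    unfolding match_potential_def same_run_length
    using matched_letters_mod[OF assms(3) \<open>R > 0\<close> assms(4,5) p q assms(12)]
      matched_letters_mod[OF assms(3) \<open>R > 0\<close> assms(4,5,8,9,13)] same_run_length
    by (intro pair_potential_step assms(1,2,6,7)
        run_length_pos_le[OF assms(3) \<open>R > 0\<close> assms(4) p]
        run_length_pos_le[OF assms(3) \<open>R > 0\<close> assms(5) q]
        run_lengths_separated[OF assms(3) \<open>R > 0\<close> assms(4,5) p q assms(14)]) simp_all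
  then show ?thesis using assms(6,7) by (simp add: of_nat_diff)
qed

lemma badly_matched_span_lower_bound:
  fixes k K R L :: nat and w1 w2 I1 I2 :: "nat list"
  defines "t \<equiv> real k + 1 - real k / real R" and "M \<equiv> real R ^ (K - 1)"
  assumes "k \<ge> 2" "R \<ge> k" "L > 0" "R ^ (K - 1) dvd L" "set w1 \<subseteq> {1..K}" "set w2 \<subseteq> {1..K}"
    and "common_subseq (hat k L R w1) (hat k L R w2) I1 I2"
    and "badly_matched k L w1 w2 I1 I2"
  shows "t * real (length I1) - 4 * M * t * real (length I1) / real (k * L) - 16 * M
    \<le> real (span I1) + real (span I2)"
proof -
  define n where "n = length I1"
  have sorted: "sorted_wrt (<) I1" "sorted_wrt (<) I2" and "length I2 = n"
    and in_range: "\<And>i. i < n \<Longrightarrow> I1 ! i < length (hat k L R w1) \<and> I2 ! i < length (hat k L R w2)"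
    and letters: "\<And>i. i < n \<Longrightarrow> hat k L R w1 ! (I1 ! i) = hat k L R w2 ! (I2 ! i)"
    and parents: "\<And>i. i < n \<Longrightarrow> parent k L w1 (I1 ! i) \<noteq> parent k L w2 (I2 ! i)"
    using assms(9,10) unfolding common_subseq_def subseq_idx_def badly_matched_def n_def
    by (auto simp: nth_mem)
  have "0 \<le> real k / real R" "real k / real R \<le> 1" using assms(3,4) by simp_all
  show ?thesis
  proof (rule span_lower_bound_by_potential[where Ph = "\<lambda>i. match_potential k L R w1 w2 (I1 ! i) (I2 ! i)"])
    show "\<And>i. i < length I1 \<Longrightarrow> \<bar>match_potential k L R w1 w2 (I1 ! i) (I2 ! i)\<bar> \<le> M"
      unfolding M_def using assms(3,4,6-8) in_range parents n_def
      by (intro abs_match_potential_le) auto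
    show "\<And>i. Suc i < length I1 \<Longrightarrow> I1 ! i div (k * L) = I1 ! Suc i div (k * L) \<Longrightarrow>
      I2 ! i div (k * L) = I2 ! Suc i div (k * L) \<Longrightarrow>
      t \<le> real (I1 ! Suc i) - real (I1 ! i) + (real (I2 ! Suc i) - real (I2 ! i))
        + match_potential k L R w1 w2 (I1 ! Suc i) (I2 ! Suc i)
        - match_potential k L R w1 w2 (I1 ! i) (I2 ! i)"
      unfolding t_def using assms(3,4,6-8) sorted \<open>length I2 = n\<close> in_range letters parents n_def
      by (intro match_potential_step) (auto simp: sorted_wrt_iff_nth_less)
    assume "0 < length I1"
    then have "R \<le> R ^ (K - 1)"
      using in_range[of 0] parents[of 0] assms(3,4) unfolding n_def
      by (intro distinct_parents_imp_radix_le[OF assms(6) _ assms(7,8)]) auto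
    then have "real k \<le> M" using assms(4) unfolding M_def by (simp flip: of_nat_power)
    then show "t \<le> 2 * M + 2" unfolding t_def using \<open>0 \<le> real k / real R\<close> by linarith
  qed (use sorted \<open>length I2 = n\<close> \<open>real k / real R \<le> 1\<close> assms(3,5) in
    \<open>auto simp: n_def M_def t_def\<close>)
qed

theorem lemma3p4:
  fixes k K R L :: nat and w1 w2 I1 I2 :: "nat list"
  assumes "k \<ge> 2" and "K \<ge> 1" and "R \<ge> k" and "L > 0" and "R ^ (K - 1) dvd L"
    and "set w1 \<subseteq> {1..K}" and "set w2 \<subseteq> {1..K}"
    and "common_subseq (hat k L R w1) (hat k L R w2) I1 I2"
    and "badly_matched k L w1 w2 I1 I2"
  shows "real (span I1) + real (span I2) \<ge>
    (real k + 1 - real k / real R - 8 * real R ^ (K - 1) / real L) * real (length I1)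
    - 16 * real R ^ (K - 1)"
proof -
  define n M t where "n = length I1" and "M = real R ^ (K - 1)"
    and "t = real k + 1 - real k / real R"
  have "0 \<le> real k / real R" using assms(1,3) by simp
  then have "t \<le> 2 * real k" using assms(1) unfolding t_def by linarith
  then have "4 * M * t * real n / real (k * L) \<le> 4 * M * (2 * real k) * real n / real (k * L)"
    unfolding M_def by (intro divide_right_mono mult_right_mono mult_left_mono) auto
  also have "\<dots> = 8 * M * real n / real L" using assms(1) by simp
  finally have "4 * M * t * real n / real (k * L) \<le> 8 * M * real n / real L" .
  moreover have "t * real n - 4 * M * t * real n / real (k * L) - 16 * M
    \<le> real (span I1) + real (span I2)"
    using badly_matched_span_lower_bound[OF assms(1,3-9)] unfolding n_def M_def t_def .
  moreover have "(t - 8 * M / real L) * real n = t * real n - 8 * M * real n / real L"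
    by (simp add: algebra_simps)
  ultimately show ?thesis unfolding n_def M_def t_def by linarith
qed

end
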